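(* Let $(X,D,K)$ be a complete $b$-metric-like space with constant $K\ge1$. Assume that $S,T:X\to X$ are onto mappings such that $D(Tx,Sy)\geq R\,D(x,y)$ for all $x,y\in X$, where $R>K$ is a constant. Then $T$ and $S$ have a unique common fixed point.
   Context: A $b$-metric-like space $(X,D,K)$ is a set $X$ with a function $D:X\times X\to[0,\infty)$ and a constant $K\ge 1$ such that for all $x,y,z\in X$: (i) $D(x,y)=0\Rightarrow x=y$; (ii) $D(x,y)=D(y,x)$; (iii) $D(x,y)\le K[D(x,z)+D(z,y)]$. (Note $D(x,x)$ need not be $0$.) A sequence $\{x_n\}$ converges to $x$ if $\lim_{n\to\infty}D(x_n,x)=D(x,x)$. A sequence $\{x_n\}$ is Cauchy if $\lim_{n,m\to\infty}D(x_n,x_m)$ exists and is finite. The space is complete if every Cauchy sequence $\{x_n\}$ converges to some $x\in X$ with $\lim_{n,m\to\infty}D(x_n,x_m)=D(x,x)=\lim_{n\to\infty}D(x_n,x)$. *)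

theory Defs
  imports "HOL-Analysis.Analysis"
begin

definition b_metric_like :: "'a set \<Rightarrow> ('a \<Rightarrow> 'a \<Rightarrow> real) \<Rightarrow> real \<Rightarrow> bool" where
  "b_metric_like X D K \<longleftrightarrow> K \<ge> 1 \<and>
     (\<forall>x\<in>X. \<forall>y\<in>X. D x y \<ge> 0) \<and>
     (\<forall>x\<in>X. \<forall>y\<in>X. D x y = 0 \<longrightarrow> x = y) \<and>
     (\<forall>x\<in>X. \<forall>y\<in>X. D x y = D y x) \<and>
     (\<forall>x\<in>X. \<forall>y\<in>X. \<forall>z\<in>X. D x y \<le> K * (D x z + D z y))"

definition bml_converges :: "('a \<Rightarrow> 'a \<Rightarrow> real) \<Rightarrow> (nat \<Rightarrow> 'a) \<Rightarrow> 'a \<Rightarrow> bool" where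
  "bml_converges D s x \<longleftrightarrow> (\<lambda>n. D (s n) x) \<longlonglongrightarrow> D x x"

definition bml_double_lim :: "('a \<Rightarrow> 'a \<Rightarrow> real) \<Rightarrow> (nat \<Rightarrow> 'a) \<Rightarrow> real \<Rightarrow> bool" where
  "bml_double_lim D s L \<longleftrightarrow> ((\<lambda>(n, m). D (s n) (s m)) \<longlongrightarrow> L) (sequentially \<times>\<^sub>F sequentially)"

definition bml_cauchy :: "('a \<Rightarrow> 'a \<Rightarrow> real) \<Rightarrow> (nat \<Rightarrow> 'a) \<Rightarrow> bool" where
  "bml_cauchy D s \<longleftrightarrow> (\<exists>L. bml_double_lim D s L)"

definition bml_complete :: "'a set \<Rightarrow> ('a \<Rightarrow> 'a \<Rightarrow> real) \<Rightarrow> bool" where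
  "bml_complete X D \<longleftrightarrow> (\<forall>s. (\<forall>n. s n \<in> X) \<longrightarrow> bml_cauchy D s \<longrightarrow>
     (\<exists>x\<in>X. bml_double_lim D s (D x x) \<and> bml_converges D s x))"

end

theory Submission
  imports Defs
begin

text \<open>Since T and S are onto, they have right inverses F and G on X, and the expansion
  condition turns into the contraction D (F a) (G b) \<le> h * D a b with h = 1/R < 1/K.
  Iterating F and G alternately gives successive distances bounded by c * h^n; because K * h < 1,
  the K-inflated triangle inequality still sums these to a geometric bound, so the orbit is Cauchy
  with double limit 0. Its limit x is a common fixed point of F and G, hence of T and S.
  Uniqueness is immediate: for common fixed points u, v, R * D u v \<le> D u v forces D u v = 0.\<close>

lemma bml_complete_null_cauchy_converges:
  assumes "bml_complete X D" "\<And>n. s n \<in> X" "bml_double_lim D s 0"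
  obtains x where "x \<in> X" "(\<lambda>n. D (s n) x) \<longlonglongrightarrow> 0"
proof -
  obtain x where "x \<in> X" "bml_double_lim D s (D x x)" "bml_converges D s x"
    using assms unfolding bml_complete_def bml_cauchy_def by blast
  moreover have "D x x = 0"
    using \<open>bml_double_lim D s (D x x)\<close> assms(3) unfolding bml_double_lim_def
    by (rule tendsto_unique[rotated]) (simp add: prod_filter_eq_bot)
  ultimately show ?thesis
    using that by (simp add: bml_converges_def)
qed

locale b_metric_like_space =
  fixes X :: "'a set" and D :: "'a \<Rightarrow> 'a \<Rightarrow> real" and K :: real
  assumes b_metric_like: "b_metric_like X D K"
begin

lemma K_ge_1: "K \<ge> 1"
  using b_metric_like by (simp add: b_metric_like_def)

lemma nonneg: "x \<in> X \<Longrightarrow> y \<in> X \<Longrightarrow> D x y \<ge> 0"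
  using b_metric_like by (simp add: b_metric_like_def)

lemma eq_if_zero: "x \<in> X \<Longrightarrow> y \<in> X \<Longrightarrow> D x y = 0 \<Longrightarrow> x = y"
  using b_metric_like by (simp add: b_metric_like_def)

lemma commute: "x \<in> X \<Longrightarrow> y \<in> X \<Longrightarrow> D x y = D y x"
  using b_metric_like by (simp add: b_metric_like_def)

lemma triangle: "x \<in> X \<Longrightarrow> y \<in> X \<Longrightarrow> z \<in> X \<Longrightarrow> D x y \<le> K * (D x z + D z y)"
  using b_metric_like unfolding b_metric_like_def by blast

lemma eq_if_zero_le: "x \<in> X \<Longrightarrow> y \<in> X \<Longrightarrow> D x y \<le> 0 \<Longrightarrow> x = y"
  using nonneg eq_if_zero by force

lemma eq_if_tendsto_zero_both:
  assumes "a \<in> X" "b \<in> X" "\<And>k. t k \<in> X"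
    and "(\<lambda>k. D (t k) a) \<longlonglongrightarrow> 0" "(\<lambda>k. D (t k) b) \<longlonglongrightarrow> 0"
  shows "a = b"
proof -
  have "D a b \<le> K * (D (t k) a + D (t k) b)" for k
    using triangle[of a b "t k"] commute[of a "t k"] assms(1-3) by simp
  moreover have "(\<lambda>k. K * (D (t k) a + D (t k) b)) \<longlonglongrightarrow> 0"
    using tendsto_mult_right_zero[OF tendsto_add_zero[OF assms(4,5)]] .
  ultimately have "D a b \<le> 0"
    by (intro LIMSEQ_le_const) auto
  then show ?thesis
    using eq_if_zero_le assms(1,2) by blast
qed

lemma geometric_chain_bound:
  assumes sX: "\<And>n. s n \<in> X"
    and step: "\<And>n. D (s n) (s (Suc n)) \<le> c * h ^ n"
    and h: "h \<ge> 0" "K * h < 1"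
  shows "D (s n) (s (n + p)) \<le> 2 * K * c / (1 - K * h) * h ^ n"
proof -
  define C where "C = 2 * K * c / (1 - K * h)"
  have c: "c \<ge> 0"
    using step[of 0] nonneg[OF sX sX, of 0 1] by simp
  \<comment> \<open>C (1 - K h) = 2 K c is what makes K (c h^n + C h^(n+1)) \<le> C h^n, the induction step.\<close>
  have C_eq: "C * (1 - K * h) = 2 * K * c"
    using h by (simp add: C_def)
  have C_nonneg: "C \<ge> 0"
    using h K_ge_1 c by (simp add: C_def)
  have "D (s m) (s (m + q)) \<le> C * h ^ m" for m q
  proof (induction q arbitrary: m)
    case 0
    have "D (s m) (s m) \<le> K * (D (s m) (s (Suc m)) + D (s (Suc m)) (s m))"
      using triangle sX by blast
    also have "\<dots> \<le> 2 * K * (c * h ^ m)"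
      using step[of m] commute[OF sX sX] K_ge_1 by simp
    also have "\<dots> = C * (1 - K * h) * h ^ m"
      using C_eq by simp
    also have "\<dots> \<le> C * h ^ m"
      using h K_ge_1 C_nonneg by (intro mult_right_mono mult_left_le) auto
    finally show ?case
      by simp
  next
    case (Suc q)
    have "D (s m) (s (m + Suc q)) \<le> K * (D (s m) (s (Suc m)) + D (s (Suc m)) (s (Suc m + q)))"
      using triangle sX by simp
    also have "\<dots> \<le> K * (c * h ^ m + C * h ^ Suc m)"
      using step[of m] Suc[of "Suc m"] K_ge_1 by (intro mult_left_mono) auto
    also have "\<dots> = C * h ^ m - K * c * h ^ m"
    proof -
      have "C * h ^ m - K * c * h ^ m - K * (c * h ^ m + C * h ^ Suc m)
          = (C * (1 - K * h) - 2 * K * c) * h ^ m"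
        by (simp add: algebra_simps)
      then show ?thesis
        using C_eq by simp
    qed
    also have "\<dots> \<le> C * h ^ m"
      using K_ge_1 c h by simp
    finally show ?case .
  qed
  then show ?thesis
    by (simp add: C_def)
qed

lemma double_lim_zero_if_geometric:
  assumes sX: "\<And>n. s n \<in> X"
    and step: "\<And>n. D (s n) (s (Suc n)) \<le> c * h ^ n"
    and h: "h \<ge> 0" "K * h < 1"
  shows "bml_double_lim D s 0"
proof -
  define C where "C = 2 * K * c / (1 - K * h)"
  have bound: "D (s n) (s m) \<le> C * h ^ min n m" for n m
  proof (cases "n \<le> m")
    case True
    then show ?thesis
      using geometric_chain_bound[OF sX step h, of n "m - n"] by (simp add: C_def min_def)
  next
    case False
    then show ?thesis
      using geometric_chain_bound[OF sX step h, of m "n - m"] commute[OF sX sX]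
      by (simp add: C_def min_def)
  qed
  have h_lt_1: "h < 1"
    using h K_ge_1 mult_right_mono[of 1 K h] by linarith
  have lim: "(\<lambda>n. C * h ^ n) \<longlonglongrightarrow> 0"
    using h h_lt_1 by (intro tendsto_mult_right_zero LIMSEQ_power_zero) auto
  show ?thesis
    unfolding bml_double_lim_def
  proof (rule tendstoI)
    fix e :: real
    assume "e > 0"
    then obtain N where N: "\<And>n. n \<ge> N \<Longrightarrow> \<bar>C * h ^ n\<bar> < e"
      using lim unfolding LIMSEQ_def dist_real_def by auto
    show "\<forall>\<^sub>F nm in sequentially \<times>\<^sub>F sequentially. dist ((\<lambda>(n, m). D (s n) (s m)) nm) 0 < e"
      unfolding eventually_prod_sequentially
    proof (intro exI allI impI)
      fix n m
      assume "N \<le> n" "N \<le> m"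
      then show "dist ((\<lambda>(n, m). D (s n) (s m)) (n, m)) 0 < e"
        using N[of "min n m"] bound[of n m] nonneg[OF sX sX] by (simp add: dist_real_def)
    qed
  qed
qed


lemma fixed_points_eq_if_expansive_pair:
  assumes "R > 1" and expansive: "\<And>x y. x \<in> X \<Longrightarrow> y \<in> X \<Longrightarrow> D (T x) (S y) \<ge> R * D x y"
    and "u \<in> X" "v \<in> X" "T u = u" "S v = v"
  shows "u = v"
proof -
  have "R * D u v \<le> D u v"
    using expansive[of u v] assms(3-6) by simp
  then have "(R - 1) * D u v \<le> 0"
    by (simp add: algebra_simps)
  then have "D u v \<le> 0"
    using \<open>R > 1\<close> by (simp add: mult_le_0_iff)
  then show ?thesis
    using eq_if_zero_le assms(3,4) by blast
qed

lemma common_fixed_point_if_contractive_pair: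
  assumes complete: "bml_complete X D" and "X \<noteq> {}"
    and FX: "\<And>x. x \<in> X \<Longrightarrow> F x \<in> X" and GX: "\<And>x. x \<in> X \<Longrightarrow> G x \<in> X"
    and h: "h \<ge> 0" "K * h < 1"
    and contractive: "\<And>a b. a \<in> X \<Longrightarrow> b \<in> X \<Longrightarrow> D (F a) (G b) \<le> h * D a b"
  shows "\<exists>x\<in>X. F x = x \<and> G x = x"
proof -
  obtain x0 where x0: "x0 \<in> X"
    using \<open>X \<noteq> {}\<close> by blast
  define s where "s = rec_nat x0 (\<lambda>n y. if even n then F y else G y)"
  have s_Suc: "s (Suc n) = (if even n then F (s n) else G (s n))" for n
    by (simp add: s_def)
  have sX: "s n \<in> X" for n
    by (induction n) (auto simp: s_def x0 FX GX)
  have ratio: "D (s (Suc n)) (s (Suc (Suc n))) \<le> h * D (s n) (s (Suc n))" for n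
  proof (cases "even n")
    case True
    then show ?thesis
      using contractive[OF sX sX, of n "Suc n"] by (simp add: s_Suc)
  next
    case False
    have "D (s (Suc n)) (s (Suc (Suc n))) = D (F (s (Suc n))) (G (s n))"
      using False commute[OF sX sX, of "Suc n" "Suc (Suc n)"] by (simp add: s_Suc)
    also have "\<dots> \<le> h * D (s (Suc n)) (s n)"
      using contractive sX by blast
    finally show ?thesis
      using commute[OF sX sX] by simp
  qed
  have step: "D (s n) (s (Suc n)) \<le> D (s 0) (s 1) * h ^ n" for n
  proof (induction n)
    case (Suc n)
    then show ?case
      using ratio[of n] h(1) mult_left_mono[OF Suc, of h] by (simp add: algebra_simps)
  qed simp
  obtain x where x: "x \<in> X" and conv: "(\<lambda>n. D (s n) x) \<longlonglongrightarrow> 0"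
    using bml_complete_null_cauchy_converges[OF complete sX
        double_lim_zero_if_geometric[OF sX step h]] by blast
  have conv_odd: "(\<lambda>k. D (s (2 * k + 1)) x) \<longlonglongrightarrow> 0"
    using LIMSEQ_subseq_LIMSEQ[OF conv, of "\<lambda>k. 2 * k + 1"] by (simp add: strict_mono_def o_def)
  have conv_even: "(\<lambda>k. D (s (2 * k)) x) \<longlonglongrightarrow> 0"
    using LIMSEQ_subseq_LIMSEQ[OF conv, of "\<lambda>k. 2 * k"] by (simp add: strict_mono_def o_def)
  have conv_even_Suc: "(\<lambda>k. D (s (2 * k + 2)) x) \<longlonglongrightarrow> 0"
    using LIMSEQ_subseq_LIMSEQ[OF conv, of "\<lambda>k. 2 * k + 2"] by (simp add: strict_mono_def o_def)
  have near_Gx: "\<bar>D (s (2 * k + 1)) (G x)\<bar> \<le> h * D (s (2 * k)) x" for k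
    using contractive[OF sX x] nonneg[OF sX GX[OF x], of "2 * k + 1"] by (simp add: s_Suc)
  have near_Fx: "\<bar>D (s (2 * k + 2)) (F x)\<bar> \<le> h * D (s (2 * k + 1)) x" for k
  proof -
    have "D (s (2 * k + 2)) (F x) = D (F x) (G (s (2 * k + 1)))"
      using commute[OF sX FX[OF x], of "2 * k + 2"] by (simp add: s_Suc)
    also have "\<dots> \<le> h * D (s (2 * k + 1)) x"
      using contractive[OF x sX] commute[OF x sX] by simp
    finally show ?thesis
      using nonneg[OF sX FX[OF x]] by simp
  qed
  have "(\<lambda>k. D (s (2 * k + 1)) (G x)) \<longlonglongrightarrow> 0"
    using near_Gx
    by (intro Lim_null_comparison[OF always_eventually tendsto_mult_right_zero[OF conv_even]]) auto
  then have "G x = x"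
    using eq_if_tendsto_zero_both[OF x GX[OF x] sX conv_odd] by simp
  moreover have "(\<lambda>k. D (s (2 * k + 2)) (F x)) \<longlonglongrightarrow> 0"
    using near_Fx
    by (intro Lim_null_comparison[OF always_eventually tendsto_mult_right_zero[OF conv_odd]]) auto
  then have "F x = x"
    using eq_if_tendsto_zero_both[OF x FX[OF x] sX conv_even_Suc] by simp
  ultimately show ?thesis
    using x by blast
qed

end

theorem corollary2p2:
  fixes X :: "'a set" and D :: "'a \<Rightarrow> 'a \<Rightarrow> real" and K R :: real
    and S T :: "'a \<Rightarrow> 'a"
  assumes "X \<noteq> {}" and "b_metric_like X D K"
    and "bml_complete X D"
    and "\<forall>x\<in>X. S x \<in> X" and "\<forall>x\<in>X. T x \<in> X"
    and "S ` X = X" and "T ` X = X"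
    and "R > K"
    and "\<forall>x\<in>X. \<forall>y\<in>X. D (T x) (S y) \<ge> R * D x y"
  shows "\<exists>!u. u \<in> X \<and> T u = u \<and> S u = u"
proof -
  interpret b_metric_like_space X D K
    by unfold_locales (fact assms(2))
  have "R > 1" "R > 0"
    using K_ge_1 \<open>R > K\<close> by auto
  define F where "F = inv_into X T"
  define G where "G = inv_into X S"
  have F: "F y \<in> X" "T (F y) = y" if "y \<in> X" for y
    using that \<open>T ` X = X\<close> by (auto simp: F_def inv_into_into f_inv_into_f)
  have G: "G y \<in> X" "S (G y) = y" if "y \<in> X" for y
    using that \<open>S ` X = X\<close> by (auto simp: G_def inv_into_into f_inv_into_f)
  have "D (F a) (G b) \<le> 1 / R * D a b" if "a \<in> X" "b \<in> X" for a b
    using assms(9) F[OF that(1)] G[OF that(2)] \<open>R > 0\<close> by (force simp: field_simps)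
  moreover have "K * (1 / R) < 1"
    using \<open>R > K\<close> \<open>R > 0\<close> by simp
  ultimately obtain x where "x \<in> X" "F x = x" "G x = x"
    using common_fixed_point_if_contractive_pair[OF assms(3,1), of F G "1 / R"] F G \<open>R > 0\<close>
    by auto
  then have "T x = x" "S x = x"
    using F G by metis+
  then show ?thesis
    using \<open>x \<in> X\<close> fixed_points_eq_if_expansive_pair[OF \<open>R > 1\<close>, of T S] assms(9) by blast
qed

end
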